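(* Let $\rho>0$ and assume $\Gamma(0)<\Gamma(1)$ and $1+\rho\ln\mu(0)<0$. Let $\nu_\star(\rho)$ be the unique solution in $(0,\mu(1))$ of $1+\rho\ln G(\nu,\mu(1))=0$. Then for every $\rho$-admissible scaling $n\mapsto L_n$, \[ \lim_{n\to\infty}\mathbb{P}\big[\mathbb{M}(n;L_n)\text{ contains no isolated nodes}\big]=\begin{cases}0 & \text{if } 1+\rho\ln\big(\Gamma(1)^{\nu_\star(\rho)}\Gamma(0)^{1-\nu_\star(\rho)}\big)<0,\\ 1 & \text{if } 1+\rho\ln\big(\Gamma(1)^{\nu_\star(\rho)}\Gamma(0)^{1-\nu_\star(\rho)}\big)>0.\end{cases} \]
   Context: Homogeneous binary MAG model. Fix $\mu(0),\mu(1)\in(0,1)$ with $\mu(0)+\mu(1)=1$, and a symmetric $2\times2$ matrix $(q(a,b))_{a,b\in\{0,1\}}$ with $q(0,1)=q(1,0)$ and $0<q(a,b)<1$. On a probability space, let $\{A, A_\ell(u):\ell,u\ge1\}$ be i.i.d. $\{0,1\}$-valued with $\mathbb{P}[A=1]=\mu(1)$, and independently let $\{U(u,v):1\le u<v\}$ be i.i.d. uniform on $(0,1)$, $U(v,u)=U(u,v)$. For $L\ge1$, $\mathbf{A}_L(u)=(A_1(u),\dots,A_L(u))$, $Q_L(\mathbf a,\mathbf b)=\prod_{\ell=1}^L q(a_\ell,b_\ell)$. The graph $\mathbb{M}(n;L)$ on $\{1,\dots,n\}$ has an edge between distinct $u,v$ iff $U(u,v)\le Q_L(\mathbf A_L(u),\mathbf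 A_L(v))$; a node is isolated if it has no neighbor. $\Gamma(a)=\mathbb{E}[q(a,A)]=q(a,0)\mu(0)+q(a,1)\mu(1)$. A scaling $n\mapsto L_n$ of positive integers is $\rho$-admissible if $L_n\sim\rho\ln n$. For $0<\nu,\mu<1$, $G(\nu,\mu)=(\mu/\nu)^\nu\big((1-\mu)/(1-\nu)\big)^{1-\nu}$, extended continuously to $\nu\in[0,1]$ by $G(0,\mu)=1-\mu$, $G(1,\mu)=\mu$. *)

theory Defs
  imports "HOL-Probability.Probability" "HOL-Library.Landau_Symbols"
begin

text \<open>Attribute values 0/1 are encoded as booleans (True = 1).\<close>
definition b2n :: "bool \<Rightarrow> nat" where "b2n b = (if b then 1 else 0)"

text \<open>Marginal mean Gamma(a) = q(a,0) mu(0) + q(a,1) mu(1), with mu(1) = p, mu(0) = 1 - p.\<close>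
definition Gam :: "real \<Rightarrow> (nat \<Rightarrow> nat \<Rightarrow> real) \<Rightarrow> nat \<Rightarrow> real" where
  "Gam p q a = q a 0 * (1 - p) + q a 1 * p"

definition QL :: "(nat \<Rightarrow> nat \<Rightarrow> real) \<Rightarrow> nat \<Rightarrow> (nat \<Rightarrow> bool) \<Rightarrow> (nat \<Rightarrow> bool) \<Rightarrow> real" where
  "QL q L a b = (\<Prod>l\<in>{1..L}. q (b2n (a l)) (b2n (b l)))"

text \<open>A graph is represented by its edge indicator on pairs (u,v) with u<v.\<close>
definition mag_pmf :: "real \<Rightarrow> (nat \<Rightarrow> nat \<Rightarrow> real) \<Rightarrow> nat \<Rightarrow> nat \<Rightarrow> (nat \<times> nat \<Rightarrow> bool) pmf" where
  "mag_pmf p q n L =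
     bind_pmf (Pi_pmf ({1..n} \<times> {1..L}) False (\<lambda>_. bernoulli_pmf p))
       (\<lambda>A. Pi_pmf {(u, v). 1 \<le> u \<and> u < v \<and> v \<le> n} False
              (\<lambda>(u, v). bernoulli_pmf (QL q L (\<lambda>l. A (u, l)) (\<lambda>l. A (v, l)))))"

definition no_isolated :: "nat \<Rightarrow> (nat \<times> nat \<Rightarrow> bool) \<Rightarrow> bool" where
  "no_isolated n E \<longleftrightarrow> (\<forall>u\<in>{1..n}. \<exists>v\<in>{1..n}. v \<noteq> u \<and> E (min u v, max u v))"

text \<open>G(nu,mu), extended continuously to nu in {0,1}.\<close>
definition G :: "real \<Rightarrow> real \<Rightarrow> real" where
  "G \<nu> \<mu> = (if \<nu> = 0 then 1 - \<mu> else if \<nu> = 1 then \<mu>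
             else (\<mu> / \<nu>) powr \<nu> * ((1 - \<mu>) / (1 - \<nu>)) powr (1 - \<nu>))"

definition nu_star :: "real \<Rightarrow> real \<Rightarrow> real" where
  "nu_star p \<rho> = (THE \<nu>. \<nu> \<in> {0<..<p} \<and> 1 + \<rho> * ln (G \<nu> p) = 0)"

definition admissible :: "real \<Rightarrow> (nat \<Rightarrow> nat) \<Rightarrow> bool" where
  "admissible \<rho> L \<longleftrightarrow> (\<forall>n. L n \<ge> 1) \<and> (\<lambda>n. real (L n)) \<sim>[at_top] (\<lambda>n. \<rho> * ln (real n))"

end

theory Submission
  imports Defs "HOL-Real_Asymp.Real_Asymp"
begin

text \<open>A node whose attribute vector has a fraction \<open>\<nu>\<close> of ones is adjacent to a random other node
  with probability \<open>\<Gamma>(1)^(\<nu>L) \<Gamma>(0)^((1-\<nu>)L) = n^(\<rho> ln (\<Gamma>(1)^\<nu> \<Gamma>(0)^(1-\<nu>)) + o(1))\<close>, and by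
  Chernoff's bound and the mode of the binomial distribution about \<open>n^(1 + \<rho> ln G(\<nu>, \<mu>(1)))\<close> nodes
  have at most \<open>\<nu>L\<close> ones; as \<open>\<Gamma>(0) < \<Gamma>(1)\<close>, nodes with few ones are the ones at risk.
  If the exponent at \<open>\<nu>\<^sub>\<star>\<close> is positive, pick \<open>\<nu>\<close> slightly below \<open>\<nu>\<^sub>\<star>\<close>: nodes with at most \<open>\<nu>L\<close> ones
  do not occur, all others have a polynomially growing expected degree, and a union bound shows
  that no node is isolated. If it is negative, pick \<open>\<nu>\<close> slightly above \<open>\<nu>\<^sub>\<star>\<close>: there are many nodes
  with at most \<open>\<nu>L\<close> ones (Chernoff again) but their degrees sum to \<open>o\<close> of their number in
  expectation, so by Markov's inequality one of them is isolated.\<close>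

section \<open>Expectations under product distributions\<close>

lemma expectation_bind_pmf_bounded:
  fixes f :: "'b \<Rightarrow> real"
  assumes "\<And>x. \<bar>f x\<bar> \<le> B"
  shows "measure_pmf.expectation (bind_pmf M N) f
       = measure_pmf.expectation M (\<lambda>x. measure_pmf.expectation (N x) f)"
  unfolding measure_pmf_bind
  by (rule integral_bind[where K="count_space UNIV" and B=B and B'=1])
     (use assms in \<open>auto simp: measure_pmf.emeasure_space_1
        intro!: measure_pmf.finite_measure_axioms measure_pmf_in_subprob_algebra\<close>)

lemma prob_bind_pmf:
  "measure_pmf.prob (bind_pmf M N) S = measure_pmf.expectation M (\<lambda>x. measure_pmf.prob (N x) S)"
  using expectation_bind_pmf_bounded[of "indicator S" 1 M N] by (simp add: indicator_def)

lemma prob_Pi_pmf_bernoulli_all_False: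
  assumes A: "finite A" and I: "I \<subseteq> A" and Q: "\<And>x. x \<in> I \<Longrightarrow> 0 \<le> Q x \<and> Q x \<le> 1"
  shows "measure_pmf.prob (Pi_pmf A False (\<lambda>x. bernoulli_pmf (Q x))) {E. \<forall>x\<in>I. \<not> E x}
       = (\<Prod>x\<in>I. 1 - Q x)"
proof -
  have "{E. \<forall>x\<in>I. \<not> E x} = Pi A (\<lambda>x. if x \<in> I then {False} else UNIV)"
    using I by (auto simp: Pi_def)
  then have "measure_pmf.prob (Pi_pmf A False (\<lambda>x. bernoulli_pmf (Q x))) {E. \<forall>x\<in>I. \<not> E x}
      = (\<Prod>x\<in>A. if x \<in> I then 1 - Q x else 1)"
    using Q by (simp add: measure_Pi_pmf_Pi[OF A] measure_pmf_single if_distrib cong: if_cong)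
  also have "\<dots> = (\<Prod>x\<in>I. 1 - Q x)"
    using I by (simp add: prod.If_cases[OF A] Int_absorb1)
  finally show ?thesis .
qed

lemma Pi_pmf_Times_rows:
  fixes B :: "bool pmf"
  assumes "finite U" "finite J"
  shows "map_pmf (\<lambda>A u. if u \<in> U then (\<lambda>l. A (u, l)) else (\<lambda>_. False)) (Pi_pmf (U \<times> J) False (\<lambda>_. B))
         = Pi_pmf U (\<lambda>_. False) (\<lambda>_. Pi_pmf J False (\<lambda>_. B))"
  using assms(1)
proof (induction rule: finite_induct)
  case empty
  then show ?case by (simp add: fun_eq_iff)
next
  case (insert x U)
  define P1 where "P1 = Pi_pmf ({x} \<times> J) False (\<lambda>_. B)"
  define P2 where "P2 = Pi_pmf (U \<times> J) False (\<lambda>_. B)"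
  define rows where "rows = (\<lambda>(A::'a \<times> 'b \<Rightarrow> bool) u. if u \<in> U then (\<lambda>l. A (u, l)) else (\<lambda>_. False))"
  define h where "h = (\<lambda>l::'b. (x, l))"
  have fin: "finite ({x} \<times> J)" "finite (U \<times> J)" using insert assms by auto
  have row_x: "Pi_pmf J False (\<lambda>_. B) = map_pmf (\<lambda>g. g \<circ> h) P1"
    unfolding P1_def by (rule Pi_pmf_bij_betw) (auto simp: h_def bij_betw_def inj_on_def assms)
  have "Pi_pmf (insert x U) (\<lambda>_. False) (\<lambda>_. Pi_pmf J False (\<lambda>_. B))
      = map_pmf (\<lambda>(y, f). f(x := y)) (pair_pmf (map_pmf (\<lambda>g. g \<circ> h) P1) (map_pmf rows P2))"
    using insert by (subst Pi_pmf_insert) (auto simp: row_x rows_def P2_def)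
  also have "\<dots> = map_pmf (\<lambda>(f, g). (rows g)(x := f \<circ> h)) (pair_pmf P1 P2)"
    by (simp add: map_pair[symmetric] pmf.map_comp o_def case_prod_beta split_beta')
  finally have rhs: "Pi_pmf (insert x U) (\<lambda>_. False) (\<lambda>_. Pi_pmf J False (\<lambda>_. B))
      = map_pmf (\<lambda>(f, g). (rows g)(x := f \<circ> h)) (pair_pmf P1 P2)" .
  have "insert x U \<times> J = ({x} \<times> J) \<union> (U \<times> J)" and disj: "({x} \<times> J) \<inter> (U \<times> J) = {}"
    using insert by auto
  then have "Pi_pmf (insert x U \<times> J) False (\<lambda>_. B)
      = map_pmf (\<lambda>(f, g) y. if y \<in> {x} \<times> J then f y else g y) (pair_pmf P1 P2)"
    unfolding P1_def P2_def by (simp only: Pi_pmf_union[OF fin disj])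
  moreover have "map_pmf (\<lambda>A u. if u \<in> insert x U then (\<lambda>l. A (u, l)) else (\<lambda>_. False))
      (map_pmf (\<lambda>(f, g) y. if y \<in> {x} \<times> J then f y else g y) (pair_pmf P1 P2))
      = map_pmf (\<lambda>(f, g). (rows g)(x := f \<circ> h)) (pair_pmf P1 P2)"
    unfolding pmf.map_comp
  proof (rule map_pmf_cong[OF refl])
    fix z assume z: "z \<in> set_pmf (pair_pmf P1 P2)"
    obtain f g where zfg: "z = (f, g)" by (cases z)
    have "f y = False" if "y \<notin> {x} \<times> J" for y
      using z zfg that set_Pi_pmf_subset[OF fin(1), of False "\<lambda>_. B"] unfolding P1_def by (cases y) auto
    moreover have "g y = False" if "y \<notin> U \<times> J" for y
      using z zfg that set_Pi_pmf_subset[OF fin(2), of False "\<lambda>_. B"] unfolding P2_def by (cases y) auto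
    ultimately show "((\<lambda>A u. if u \<in> insert x U then (\<lambda>l. A (u, l)) else (\<lambda>_. False)) \<circ>
          (\<lambda>(f, g) y. if y \<in> {x} \<times> J then f y else g y)) z = (\<lambda>(f, g). (rows g)(x := f \<circ> h)) z"
      unfolding zfg using insert.hyps by (auto simp: fun_eq_iff rows_def h_def)
  qed
  ultimately show ?case using rhs by simp
qed

lemma expectation_Pi_pmf_given_component:
  fixes f :: "'a \<Rightarrow> real" and h :: "'b \<Rightarrow> 'a \<Rightarrow> 'a \<Rightarrow> real"
  assumes N: "finite N" "u \<in> N" and R: "finite (set_pmf R)"
    and f: "\<And>a. \<bar>f a\<bar> \<le> 1" and h: "\<And>v a b. 0 \<le> h v a b \<and> h v a b \<le> 1"
  shows "measure_pmf.expectation (Pi_pmf N d (\<lambda>_. R)) (\<lambda>r. f (r u) * (\<Prod>v\<in>N-{u}. h v (r u) (r v)))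
       = measure_pmf.expectation R (\<lambda>a. f a * (\<Prod>v\<in>N-{u}. measure_pmf.expectation R (h v a)))"
proof -
  let ?rest = "Pi_pmf (N - {u}) d (\<lambda>_. R)"
  have "Pi_pmf N d (\<lambda>_. R) = Pi_pmf (insert u (N - {u})) d (\<lambda>_. R)"
    using N by (simp add: insert_absorb)
  also have "\<dots> = bind_pmf R (\<lambda>y. map_pmf (\<lambda>g. g(u := y)) ?rest)"
    using N by (subst Pi_pmf_insert') (auto simp: map_pmf_def)
  finally have split: "Pi_pmf N d (\<lambda>_. R) = bind_pmf R (\<lambda>y. map_pmf (\<lambda>g. g(u := y)) ?rest)" .
  have bounded: "\<bar>f (r u) * (\<Prod>v\<in>N-{u}. h v (r u) (r v))\<bar> \<le> 1" for r
    using f[of "r u"] h by (simp add: abs_mult mult_le_one prod_nonneg prod_le_1)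
  have "measure_pmf.expectation (Pi_pmf N d (\<lambda>_. R)) (\<lambda>r. f (r u) * (\<Prod>v\<in>N-{u}. h v (r u) (r v)))
     = measure_pmf.expectation R (\<lambda>y. f y * measure_pmf.expectation ?rest (\<lambda>g. \<Prod>v\<in>N-{u}. h v y (g v)))"
    unfolding split
    by (subst expectation_bind_pmf_bounded[where B=1], rule bounded) (simp add: integral_map_pmf)
  also have "\<dots> = measure_pmf.expectation R (\<lambda>a. f a * (\<Prod>v\<in>N-{u}. measure_pmf.expectation R (h v a)))"
    by (intro Bochner_Integration.integral_cong refl arg_cong2[where f="(*)"] expectation_prod_Pi_pmf)
       (use N R h in \<open>auto intro: integrable_measure_pmf_finite\<close>)
  finally show ?thesis .
qed

lemma prob_le_expectation_pmf:
  fixes F :: "'a \<Rightarrow> real"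
  assumes "integrable (measure_pmf M) F" "\<And>x. indicator S x \<le> F x"
  shows "measure_pmf.prob M S \<le> measure_pmf.expectation M F"
proof -
  have "integrable (measure_pmf M) (indicator S :: 'a \<Rightarrow> real)"
    by (rule measure_pmf.integrable_const_bound[where B=1]) auto
  then have "measure_pmf.expectation M (indicator S) \<le> measure_pmf.expectation M F"
    using assms by (intro integral_mono)
  then show ?thesis by simp
qed

lemma prod_if_eq_power:
  fixes t :: "'b :: comm_monoid_mult"
  assumes "finite A"
  shows "(\<Prod>x\<in>A. if P x then t else 1) = t ^ card {x\<in>A. P x}"
  using prod.inter_filter[OF assms, of "\<lambda>_. t" P] by simp

text \<open>Chernoff's bound: Markov's inequality applied to \<open>t ^ card {i\<in>I. P (r i)}\<close>.\<close>

lemma prob_Pi_pmf_count_le: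
  fixes t x :: real
  assumes I: "finite I" and t: "0 < t" "t \<le> 1"
  shows "measure_pmf.prob (Pi_pmf I d (\<lambda>_. R)) {r. real (card {i\<in>I. P (r i)}) \<le> x}
       \<le> t powr (- x) * (1 - (1 - t) * measure_pmf.prob R {a. P a}) ^ card I"
proof -
  let ?K = "\<lambda>r. card {i\<in>I. P (r i)}"
  let ?F = "\<lambda>r. t powr (- x) * (\<Prod>i\<in>I. if P (r i) then t else 1)"
  have le_F: "indicator {r. real (?K r) \<le> x} r \<le> ?F r" for r
  proof (cases "real (?K r) \<le> x")
    case True
    have "1 \<le> t powr (real (?K r) - x)"
      using True t by (simp add: powr_def ln_le_zero_iff mult_nonpos_nonpos)
    also have "\<dots> = ?F r"
      using t by (simp add: prod_if_eq_power[OF I] powr_diff powr_realpow divide_inverse powr_minus)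
    finally show ?thesis using True by simp
  qed (use t in \<open>simp add: prod_nonneg\<close>)
  have int: "integrable (measure_pmf M) (\<lambda>r. \<Prod>i\<in>I. if P (r i) then t else 1)" for M
    using t by (intro measure_pmf.integrable_const_bound[where B=1] AE_pmfI)
               (auto simp: prod_le_1 prod_nonneg)
  have "measure_pmf.prob (Pi_pmf I d (\<lambda>_. R)) {r. real (?K r) \<le> x}
      \<le> measure_pmf.expectation (Pi_pmf I d (\<lambda>_. R)) ?F"
    by (intro prob_le_expectation_pmf integrable_mult_right int le_F)
  also have "\<dots> = t powr (- x) * (\<Prod>i\<in>I. measure_pmf.expectation R (\<lambda>a. if P a then t else 1))"
    using t by (simp only: integral_mult_right_zero, subst expectation_prod_Pi_pmf[OF I])
               (auto intro!: measure_pmf.integrable_const_bound[where B=1])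
  also have "measure_pmf.expectation R (\<lambda>a. if P a then t else 1)
      = measure_pmf.expectation R (\<lambda>a. 1 - (1 - t) * indicator {a. P a} a)"
    by (intro Bochner_Integration.integral_cong) (auto simp: indicator_def)
  also have "\<dots> = 1 - (1 - t) * measure_pmf.prob R {a. P a}"
    by (simp add: Bochner_Integration.integral_diff measure_pmf.integrable_const_bound[where B=1])
  finally show ?thesis by simp
qed

lemma prob_Pi_pmf_count_le_half_mean:
  assumes I: "finite I" and \<mu>: "\<mu> = real (card I) * measure_pmf.prob R {a. P a}"
  shows "measure_pmf.prob (Pi_pmf I d (\<lambda>_. R)) {r. real (card {i\<in>I. P (r i)}) \<le> \<mu> / 2}
       \<le> exp (\<mu> * (ln 2 - 1) / 2)"
proof -
  define \<pi> where "\<pi> = measure_pmf.prob R {a. P a}"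
  have "\<pi> \<le> 1" by (simp add: \<pi>_def)
  have "measure_pmf.prob (Pi_pmf I d (\<lambda>_. R)) {r. real (card {i\<in>I. P (r i)}) \<le> \<mu> / 2}
      \<le> (1/2) powr (- (\<mu> / 2)) * (1 - (1 - 1/2) * \<pi>) ^ card I"
    unfolding \<pi>_def by (rule prob_Pi_pmf_count_le[OF I]) auto
  also have "\<dots> = exp (\<mu> / 2 * ln 2) * (1 - \<pi> / 2) ^ card I"
    by (simp add: powr_def ln_div)
  also have "(1 - \<pi> / 2) ^ card I \<le> exp (- \<pi> / 2) ^ card I"
    using exp_ge_add_one_self[of "- \<pi> / 2"] \<open>\<pi> \<le> 1\<close> by (intro power_mono) auto
  also have "\<dots> = exp (- \<mu> / 2)" by (simp add: \<mu> \<pi>_def exp_of_nat_mult[symmetric])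
  finally show ?thesis by (simp add: exp_add[symmetric] right_diff_distrib diff_divide_distrib)
qed

section \<open>Attributes and binomial tails\<close>

definition attr_pmf :: "real \<Rightarrow> nat \<Rightarrow> (nat \<Rightarrow> bool) pmf" where
  "attr_pmf p L = Pi_pmf {1..L} False (\<lambda>_. bernoulli_pmf p)"

definition attrs_pmf :: "real \<Rightarrow> nat \<Rightarrow> nat \<Rightarrow> (nat \<Rightarrow> nat \<Rightarrow> bool) pmf" where
  "attrs_pmf p n L = Pi_pmf {1..n} (\<lambda>_. False) (\<lambda>_. attr_pmf p L)"

definition node_pairs :: "nat \<Rightarrow> (nat \<times> nat) set" where
  "node_pairs n = {(u, v). 1 \<le> u \<and> u < v \<and> v \<le> n}"

definition edges_pmf ::
    "(nat \<Rightarrow> nat \<Rightarrow> real) \<Rightarrow> nat \<Rightarrow> nat \<Rightarrow> (nat \<Rightarrow> nat \<Rightarrow> bool) \<Rightarrow> (nat \<times> nat \<Rightarrow> bool) pmf" where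
  "edges_pmf q L n A = Pi_pmf (node_pairs n) False (\<lambda>(u, v). bernoulli_pmf (QL q L (A u) (A v)))"

definition ones_count :: "nat \<Rightarrow> (nat \<Rightarrow> bool) \<Rightarrow> nat" where
  "ones_count L a = card {l\<in>{1..L}. a l}"

lemma finite_node_pairs: "finite (node_pairs n)"
  by (rule finite_subset[of _ "{1..n} \<times> {1..n}"]) (auto simp: node_pairs_def)

lemma finite_set_attr_pmf: "finite (set_pmf (attr_pmf p L))"
  unfolding attr_pmf_def by (subst set_Pi_pmf) auto

lemma finite_set_attrs_pmf: "finite (set_pmf (attrs_pmf p n L))"
  unfolding attrs_pmf_def by (subst set_Pi_pmf) (auto intro!: finite_PiE_dflt finite_set_attr_pmf)

lemma finite_set_edges_pmf: "finite (set_pmf (edges_pmf q L n A))"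
  unfolding edges_pmf_def by (subst set_Pi_pmf) (auto intro!: finite_PiE_dflt finite_node_pairs)

lemma mag_pmf_eq_bind: "mag_pmf p q n L = bind_pmf (attrs_pmf p n L) (edges_pmf q L n)"
proof -
  have "attrs_pmf p n L = map_pmf (\<lambda>A u. if u \<in> {1..n} then (\<lambda>l. A (u, l)) else (\<lambda>_. False))
           (Pi_pmf ({1..n} \<times> {1..L}) False (\<lambda>_. bernoulli_pmf p))"
    unfolding attrs_pmf_def attr_pmf_def by (rule Pi_pmf_Times_rows[symmetric]) auto
  then show ?thesis
    unfolding mag_pmf_def edges_pmf_def node_pairs_def
    by (simp add: bind_map_pmf, intro bind_pmf_cong refl Pi_pmf_cong) auto
qed

text \<open>\<open>lnG p \<nu>\<close> agrees with \<open>ln (G \<nu> p)\<close> for \<open>0 < \<nu> < 1\<close>; it is minus the Kullback-Leibler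
  divergence of Bernoulli(\<open>\<nu>\<close>) from Bernoulli(\<open>p\<close>), and smooth in \<open>\<nu>\<close>.\<close>

definition lnG :: "real \<Rightarrow> real \<Rightarrow> real" where
  "lnG p \<nu> = \<nu> * (ln p - ln \<nu>) + (1 - \<nu>) * (ln (1 - p) - ln (1 - \<nu>))"

lemma ln_G_eq_lnG: "0 < p \<Longrightarrow> p < 1 \<Longrightarrow> 0 < \<nu> \<Longrightarrow> \<nu> < 1 \<Longrightarrow> ln (G \<nu> p) = lnG p \<nu>"
  by (simp add: G_def lnG_def ln_mult ln_powr ln_div)

lemma prob_ones_count_le_exp_lnG:
  assumes p: "0 < p" "p < 1" and \<nu>: "0 < \<nu>" "\<nu> < p"
  shows "measure_pmf.prob (attr_pmf p L) {a. real (ones_count L a) \<le> \<nu> * real L}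
       \<le> exp (real L * lnG p \<nu>)"
proof -
  define t where "t = \<nu> * (1 - p) / (p * (1 - \<nu>))"
  have "\<nu> * (1 - p) < p * (1 - \<nu>)" using \<nu> by (simp add: algebra_simps)
  then have t: "0 < t" "t \<le> 1" using p \<nu> by (simp_all add: t_def)
  have "{b. b} = {True}" by auto
  then have "measure_pmf.prob (bernoulli_pmf p) {b. b} = p"
    using p by (simp add: measure_pmf_single)
  then have "measure_pmf.prob (attr_pmf p L) {a. real (ones_count L a) \<le> \<nu> * real L}
      \<le> t powr (- (\<nu> * real L)) * (1 - (1 - t) * p) ^ L"
    using prob_Pi_pmf_count_le[OF _ t, of "{1..L}" False "bernoulli_pmf p" "\<lambda>b. b" "\<nu> * real L"]
    by (simp add: attr_pmf_def ones_count_def)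
  also have "1 - (1 - t) * p = exp (ln (1 - p) - ln (1 - \<nu>))"
    using p \<nu> by (simp add: t_def exp_diff field_simps)
  also have "t powr (- (\<nu> * real L)) * exp (ln (1 - p) - ln (1 - \<nu>)) ^ L
      = exp (- (\<nu> * real L) * ln t + real L * (ln (1 - p) - ln (1 - \<nu>)))"
    using t by (simp add: powr_def mult_exp_exp algebra_simps flip: exp_of_nat_mult)
  also have "\<dots> = exp (real L * lnG p \<nu>)"
  proof -
    have ln_t: "ln t = ln \<nu> + ln (1 - p) - ln p - ln (1 - \<nu>)"
      using p \<nu> by (simp add: t_def ln_div ln_mult)
    show ?thesis unfolding ln_t lnG_def by (simp add: algebra_simps)
  qed
  finally show ?thesis .
qed

lemma prob_ones_count_le_ge_binomial_term:
  assumes "0 \<le> p" "p \<le> 1"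
  shows "real (L choose k) * p ^ k * (1 - p) ^ (L - k) \<le> measure_pmf.prob (attr_pmf p L) {a. ones_count L a \<le> k}"
proof -
  have binomial: "binomial_pmf L p = map_pmf (ones_count L) (attr_pmf p L)"
    unfolding attr_pmf_def ones_count_def[abs_def] by (rule binomial_pmf_altdef') (use assms in auto)
  have "real (L choose k) * p ^ k * (1 - p) ^ (L - k) = measure_pmf.prob (binomial_pmf L p) {k}"
    using assms by (simp add: measure_pmf_single)
  also have "\<dots> \<le> measure_pmf.prob (binomial_pmf L p) {..k}"
    by (rule measure_pmf.finite_measure_mono) auto
  also have "\<dots> = measure_pmf.prob (attr_pmf p L) {a. ones_count L a \<le> k}"
    unfolding binomial by (simp add: vimage_def)
  finally show ?thesis .
qed

lemma binomial_term_Suc: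
  fixes r :: real
  assumes "j < L"
  shows "real (L choose Suc j) * r ^ Suc j * (1 - r) ^ (L - Suc j) * (real (Suc j) * (1 - r))
       = real (L choose j) * r ^ j * (1 - r) ^ (L - j) * ((real L - real j) * r)"
proof -
  have "(L choose Suc j) * Suc j = (L - j) * (L choose j)"
    using binomial_absorption[of j L] binomial_absorb_comp[of L j] by (simp add: mult.commute)
  then have "real ((L choose Suc j) * Suc j) = real ((L - j) * (L choose j))"
    by (simp only:)
  then have binomial: "real (L choose Suc j) * real (Suc j) = real (L choose j) * (real L - real j)"
    using assms by (simp add: of_nat_diff algebra_simps)
  have power: "(1 - r) * (1 - r) ^ (L - Suc j) = (1 - r) ^ (L - j)"
    using assms by (simp add: Suc_diff_Suc flip: power_Suc)
  have "real (L choose Suc j) * r ^ Suc j * (1 - r) ^ (L - Suc j) * (real (Suc j) * (1 - r))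
      = (real (L choose Suc j) * real (Suc j)) * (r * r ^ j) * ((1 - r) * (1 - r) ^ (L - Suc j))"
    by (simp only: power_Suc mult_ac)
  also have "\<dots> = real (L choose j) * r ^ j * (1 - r) ^ (L - j) * ((real L - real j) * r)"
    unfolding binomial power by (simp only: mult_ac)
  finally show ?thesis .
qed

lemma binomial_term_le_Suc_iff:
  fixes r :: real
  assumes r: "0 < r" "r < 1" and j: "j < L"
  shows "real (L choose j) * r ^ j * (1 - r) ^ (L - j) \<le> real (L choose Suc j) * r ^ Suc j * (1 - r) ^ (L - Suc j)
     \<longleftrightarrow> real (Suc j) \<le> (real L + 1) * r"
proof -
  define T where "T = (\<lambda>j. real (L choose j) * r ^ j * (1 - r) ^ (L - j))"
  have "0 < T j" using r j by (simp add: T_def)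
  have "T j \<le> T (Suc j) \<longleftrightarrow> T j * (real (Suc j) * (1 - r)) \<le> T (Suc j) * (real (Suc j) * (1 - r))"
    using r by simp
  also have "T (Suc j) * (real (Suc j) * (1 - r)) = T j * ((real L - real j) * r)"
    using binomial_term_Suc[OF j] by (simp add: T_def)
  also have "T j * (real (Suc j) * (1 - r)) \<le> T j * ((real L - real j) * r)
      \<longleftrightarrow> real (Suc j) * (1 - r) \<le> (real L - real j) * r"
    using \<open>0 < T j\<close> by simp
  also have "\<dots> \<longleftrightarrow> real (Suc j) \<le> (real L + 1) * r"
    by (simp add: algebra_simps)
  finally show ?thesis by (simp add: T_def)
qed

lemma binomial_term_le_mode:
  fixes r :: real
  assumes k: "0 < k" "k < L" and r: "r = real k / real L" and j: "j \<le> L"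
  shows "real (L choose j) * r ^ j * (1 - r) ^ (L - j) \<le> real (L choose k) * r ^ k * (1 - r) ^ (L - k)"
proof -
  define T where "T = (\<lambda>j. real (L choose j) * r ^ j * (1 - r) ^ (L - j))"
  have r01: "0 < r" "r < 1" using k by (auto simp: r)
  have mode: "real k \<le> (real L + 1) * r" "(real L + 1) * r < real k + 1"
    using k by (simp_all add: r field_simps)
  have "T j \<le> T k"
  proof (cases "j \<le> k")
    case True
    then show ?thesis
    proof (induction j rule: inc_induct)
      case (step m)
      then have "T m \<le> T (Suc m)"
        unfolding T_def using r01 k mode by (subst binomial_term_le_Suc_iff) auto
      then show ?case using step.IH by linarith
    qed simp
  next
    case False
    then have "k \<le> j" by simp
    then show ?thesis using j
    proof (induction j rule: dec_induct)
      case (step m)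
      then have "\<not> T m \<le> T (Suc m)"
        unfolding T_def using r01 mode by (subst binomial_term_le_Suc_iff) auto
      then show ?case using step by linarith
    qed simp
  qed
  then show ?thesis by (simp add: T_def)
qed

lemma binomial_mode_ge:
  assumes k: "0 < k" "k < L"
  shows "1 / (real L + 1) \<le> real (L choose k) * (real k / real L) ^ k * (1 - real k / real L) ^ (L - k)"
proof -
  define r where "r = real k / real L"
  have "1 = (r + (1 - r)) ^ L" by simp
  also have "\<dots> = (\<Sum>j\<le>L. real (L choose j) * r ^ j * (1 - r) ^ (L - j))"
    unfolding binomial_ring by simp
  also have "\<dots> \<le> (\<Sum>j\<le>L. real (L choose k) * r ^ k * (1 - r) ^ (L - k))"
    by (intro sum_mono binomial_term_le_mode[OF k r_def]) auto
  also have "\<dots> = (real L + 1) * (real (L choose k) * r ^ k * (1 - r) ^ (L - k))"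
    by simp
  finally show ?thesis by (simp add: r_def divide_le_eq mult.commute)
qed

lemma binomial_term_ge_exp_lnG:
  assumes p: "0 < p" "p < 1" and k: "0 < k" "k < L"
  shows "exp (real L * lnG p (real k / real L)) / (real L + 1) \<le> real (L choose k) * p ^ k * (1 - p) ^ (L - k)"
proof -
  define r where "r = real k / real L"
  have r01: "0 < r" "r < 1" using k by (auto simp: r_def)
  have "real L * r = real k" "real L * (1 - r) = real (L - k)"
    using k by (simp_all add: r_def of_nat_diff right_diff_distrib)
  then have "real L * lnG p r = real k * (ln p - ln r) + real (L - k) * (ln (1 - p) - ln (1 - r))"
    unfolding lnG_def by (simp add: distrib_left flip: mult.assoc)
  then have "exp (real L * lnG p r) = exp (ln p - ln r) ^ k * exp (ln (1 - p) - ln (1 - r)) ^ (L - k)"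
    by (simp add: exp_add exp_of_nat_mult)
  also have "\<dots> = (p / r) ^ k * ((1 - p) / (1 - r)) ^ (L - k)"
    using p r01 by (simp add: exp_diff)
  finally have "real (L choose k) * p ^ k * (1 - p) ^ (L - k)
      = (real (L choose k) * r ^ k * (1 - r) ^ (L - k)) * exp (real L * lnG p r)"
    using r01 by (simp add: power_divide field_simps)
  also have "\<dots> \<ge> 1 / (real L + 1) * exp (real L * lnG p r)"
    unfolding r_def using binomial_mode_ge[OF k] by (intro mult_right_mono) auto
  finally show ?thesis by (simp add: r_def)
qed

section \<open>The exponent \<open>lnG\<close> and the threshold \<open>nu_star\<close>\<close>

lemma lnG_self: "lnG p p = 0"
  by (simp add: lnG_def)

lemma lnG_tendsto_at_right_0: "0 < p \<Longrightarrow> p < 1 \<Longrightarrow> (lnG p \<longlongrightarrow> ln (1 - p)) (at_right 0)"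
  unfolding lnG_def[abs_def] by real_asymp

lemma lnG_has_real_derivative:
  assumes "0 < \<nu>" "\<nu> < 1"
  shows "(lnG p has_real_derivative (ln p - ln \<nu> - ln (1 - p) + ln (1 - \<nu>))) (at \<nu>)"
proof -
  have D: "((\<lambda>\<nu>. \<nu> * (ln p - ln \<nu>) + (1 - \<nu>) * (ln (1 - p) - ln (1 - \<nu>))) has_real_derivative
      (1 * (ln p - ln \<nu>) + \<nu> * (0 - 1 / \<nu>)
        + ((0 - 1) * (ln (1 - p) - ln (1 - \<nu>)) + (1 - \<nu>) * (0 - (0 - 1) / (1 - \<nu>))))) (at \<nu>)"
    using assms by (auto intro!: derivative_eq_intros)
  have eq: "1 * (ln p - ln \<nu>) + \<nu> * (0 - 1 / \<nu>)
        + ((0 - 1) * (ln (1 - p) - ln (1 - \<nu>)) + (1 - \<nu>) * (0 - (0 - 1) / (1 - \<nu>)))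
      = ln p - ln \<nu> - ln (1 - p) + ln (1 - \<nu>)"
    using assms by (simp add: field_simps)
  show ?thesis using D unfolding eq lnG_def[abs_def] .
qed

lemma continuous_on_lnG:
  assumes "0 < a" "b < 1"
  shows "continuous_on {a..b} (lnG p)"
proof (rule continuous_at_imp_continuous_on, intro ballI)
  fix x assume "x \<in> {a..b}"
  then show "isCont (lnG p) x"
    using assms lnG_has_real_derivative[of x p] DERIV_isCont by auto
qed

lemma lnG_strict_mono:
  assumes p: "0 < p" "p < 1" and xy: "0 < x" "x < y" "y \<le> p"
  shows "lnG p x < lnG p y"
proof (rule DERIV_pos_imp_increasing_open[OF xy(2)])
  fix z assume z: "x < z" "z < y"
  then have "z * (1 - p) < p * (1 - z)" using xy p by (simp add: algebra_simps)
  then have "ln (z * (1 - p)) < ln (p * (1 - z))" using z xy p by (subst ln_less_cancel_iff) auto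
  then have "0 < ln p - ln z - ln (1 - p) + ln (1 - z)" using z xy p by (simp add: ln_mult)
  then show "\<exists>d. (lnG p has_real_derivative d) (at z) \<and> 0 < d"
    using lnG_has_real_derivative[of z p] z xy p by auto
qed (use continuous_on_lnG xy p in auto)

lemma lnG_mono: "0 < p \<Longrightarrow> p < 1 \<Longrightarrow> 0 < x \<Longrightarrow> x \<le> y \<Longrightarrow> y \<le> p \<Longrightarrow> lnG p x \<le> lnG p y"
  using lnG_strict_mono[of p x y] by (cases "x = y") auto

lemma prob_ones_count_le_ge_exp_lnG:
  assumes p: "0 < p" "p < 1" and \<nu>: "0 < \<nu>'" "\<nu>' < \<nu>" "\<nu> < p" and L: "1 \<le> (\<nu> - \<nu>') * real L"
  shows "exp (real L * lnG p \<nu>') / (real L + 1)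
       \<le> measure_pmf.prob (attr_pmf p L) {a. real (ones_count L a) \<le> \<nu> * real L}"
proof -
  define k where "k = nat \<lfloor>\<nu> * real L\<rfloor>"
  have "(\<nu> - \<nu>') * real L \<le> 1 * real L" using \<nu> p by (intro mult_right_mono) auto
  then have L1: "1 \<le> real L" using L by linarith
  have k: "real k \<le> \<nu> * real L" "\<nu> * real L - 1 < real k"
    using \<nu> L1 by (simp_all add: k_def)
  have "\<nu>' * real L \<le> real k" using k L by (simp add: algebra_simps)
  then have k_ge: "\<nu>' \<le> real k / real L" using L1 by (simp add: field_simps)
  have "\<nu> * real L < 1 * real L" using \<nu> p L1 by (intro mult_strict_right_mono) auto
  then have "k < L" using k by simp
  have "0 < k" using k_ge \<nu> L1 by (auto intro: ccontr)
  have "\<nu> * real L \<le> p * real L" using \<nu> by (intro mult_right_mono) auto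
  then have "real k \<le> p * real L" using k(1) by linarith
  then have "real k / real L \<le> p" using L1 by (simp add: divide_le_eq)
  then have "exp (real L * lnG p \<nu>') / (real L + 1) \<le> exp (real L * lnG p (real k / real L)) / (real L + 1)"
    using lnG_mono[OF p \<nu>(1) k_ge] by (intro divide_right_mono exp_mono mult_left_mono) auto
  also have "\<dots> \<le> real (L choose k) * p ^ k * (1 - p) ^ (L - k)"
    by (rule binomial_term_ge_exp_lnG[OF p \<open>0 < k\<close> \<open>k < L\<close>])
  also have "\<dots> \<le> measure_pmf.prob (attr_pmf p L) {a. ones_count L a \<le> k}"
    using p by (intro prob_ones_count_le_ge_binomial_term) auto
  also have "{a. ones_count L a \<le> k} = {a. real (ones_count L a) \<le> \<nu> * real L}"
  proof -
    have "m \<le> k \<longleftrightarrow> real m \<le> \<nu> * real L" for m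
      using k(1) le_nat_floor[of m "\<nu> * real L"] unfolding k_def[symmetric] by force
    then show ?thesis by simp
  qed
  finally show ?thesis .
qed

lemma lnG_root_exists:
  assumes p: "0 < p" "p < 1" and \<rho>: "\<rho> > 0" and \<mu>0: "1 + \<rho> * ln (1 - p) < 0"
  obtains \<nu> where "0 < \<nu>" "\<nu> < p" "1 + \<rho> * lnG p \<nu> = 0"
proof -
  have "((\<lambda>\<nu>. 1 + \<rho> * lnG p \<nu>) \<longlongrightarrow> 1 + \<rho> * ln (1 - p)) (at_right 0)"
    by (intro tendsto_intros lnG_tendsto_at_right_0 p)
  then have "eventually (\<lambda>\<nu>. 1 + \<rho> * lnG p \<nu> < 0) (at_right 0)"
    using \<mu>0 by (rule order_tendstoD(2))
  moreover have "eventually (\<lambda>\<nu>. \<nu> \<in> {0<..<p}) (at_right 0)"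
    using p by (intro eventually_at_right_real)
  ultimately have "eventually (\<lambda>\<nu>. 1 + \<rho> * lnG p \<nu> < 0 \<and> \<nu> \<in> {0<..<p}) (at_right 0)"
    by eventually_elim auto
  then obtain a where a: "1 + \<rho> * lnG p a < 0" "0 < a" "a < p"
    using eventually_happens'[OF trivial_limit_at_right_real] by auto
  have "continuous_on {a..p} (\<lambda>\<nu>. 1 + \<rho> * lnG p \<nu>)"
    using continuous_on_lnG[of a p p] a p by (auto intro!: continuous_intros)
  then obtain \<nu> where \<nu>: "a \<le> \<nu>" "\<nu> \<le> p" "1 + \<rho> * lnG p \<nu> = 0"
    using IVT'[of "\<lambda>\<nu>. 1 + \<rho> * lnG p \<nu>" a 0 p] a by (auto simp: lnG_self)
  moreover have "\<nu> \<noteq> a" "\<nu> \<noteq> p" using \<nu> a by (auto simp: lnG_self)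
  ultimately show ?thesis using a by (intro that[of \<nu>]) auto
qed

lemma nu_star_eq:
  assumes p: "0 < p" "p < 1" and \<rho>: "\<rho> > 0" and \<nu>: "0 < \<nu>" "\<nu> < p" "1 + \<rho> * lnG p \<nu> = 0"
  shows "nu_star p \<rho> = \<nu>"
  unfolding nu_star_def
proof (rule the_equality)
  show "\<nu> \<in> {0<..<p} \<and> 1 + \<rho> * ln (G \<nu> p) = 0" using \<nu> p by (simp add: ln_G_eq_lnG)
next
  fix \<nu>' assume "\<nu>' \<in> {0<..<p} \<and> 1 + \<rho> * ln (G \<nu>' p) = 0"
  then have \<nu>': "0 < \<nu>'" "\<nu>' < p" and "1 + \<rho> * lnG p \<nu>' = 0"
    using p by (auto simp: ln_G_eq_lnG)
  then have "\<rho> * lnG p \<nu>' = \<rho> * lnG p \<nu>" using \<nu>(3) by linarith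
  then have "lnG p \<nu>' = lnG p \<nu>" using \<rho> by simp
  show "\<nu>' = \<nu>"
    using lnG_strict_mono[OF p, of \<nu>' \<nu>] lnG_strict_mono[OF p, of \<nu> \<nu>'] \<nu> \<nu>' \<open>lnG p \<nu>' = lnG p \<nu>\<close>
    by (cases \<nu>' \<nu> rule: linorder_cases) auto
qed

lemma nu_star:
  assumes p: "0 < p" "p < 1" and \<rho>: "\<rho> > 0" and \<mu>0: "1 + \<rho> * ln (1 - p) < 0"
  shows "0 < nu_star p \<rho>" "nu_star p \<rho> < p" "1 + \<rho> * lnG p (nu_star p \<rho>) = 0"
  using nu_star_eq[OF p \<rho>] lnG_root_exists[OF p \<rho> \<mu>0] by metis+

section \<open>Asymptotics of admissible scalings\<close>

lemma admissible_imp_tendsto: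
  assumes adm: "admissible \<rho> L" and \<rho>: "\<rho> > 0"
  shows "((\<lambda>n. real (L n) / ln (real n)) \<longlongrightarrow> \<rho>) sequentially"
proof -
  have L: "\<And>n. L n \<ge> 1" and eq: "(\<lambda>n. real (L n)) \<sim>[at_top] (\<lambda>n. \<rho> * ln (real n))"
    using adm by (auto simp: admissible_def)
  have "((\<lambda>n. if real (L n) = 0 \<and> \<rho> * ln (real n) = 0 then 1 else real (L n) / (\<rho> * ln (real n)))
      \<longlongrightarrow> 1) at_top"
    by (rule asymp_equivD[OF eq])
  also have "(\<lambda>n. if real (L n) = 0 \<and> \<rho> * ln (real n) = 0 then 1 else real (L n) / (\<rho> * ln (real n)))
      = (\<lambda>n. real (L n) / ln (real n) / \<rho>)"
    using L by (intro ext) (auto simp: Suc_le_eq)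
  finally have "((\<lambda>n. real (L n) / ln (real n) / \<rho> * \<rho>) \<longlongrightarrow> 1 * \<rho>) sequentially"
    by (intro tendsto_mult tendsto_const)
  then show ?thesis using \<rho> by simp
qed

lemma eventually_ln_pos: "eventually (\<lambda>n::nat. ln (real n) > 0) sequentially"
  using eventually_ge_at_top[of "2::nat"] by (rule eventually_mono) auto

context
  fixes L :: "nat \<Rightarrow> nat" and \<rho> :: real
  assumes ratio: "((\<lambda>n. real (L n) / ln (real n)) \<longlongrightarrow> \<rho>) sequentially"
begin

lemma n_exp_L_tendsto_0:
  assumes "1 + \<rho> * c < 0"
  shows "((\<lambda>n. real n * exp (real (L n) * c)) \<longlongrightarrow> 0) sequentially"
proof -
  have "((\<lambda>n. 1 + real (L n) / ln (real n) * c) \<longlongrightarrow> 1 + \<rho> * c) sequentially"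
    by (intro tendsto_intros ratio)
  then have "filterlim (\<lambda>n. (1 + real (L n) / ln (real n) * c) * ln (real n)) at_bot sequentially"
    using assms filterlim_compose[OF ln_at_top filterlim_real_sequentially]
    by (rule filterlim_tendsto_neg_mult_at_bot)
  then have "filterlim (\<lambda>n. ln (real n) + real (L n) * c) at_bot sequentially"
    by (rule filterlim_cong[THEN iffD1, rotated 3])
       (auto intro: eventually_mono[OF eventually_ln_pos] simp: field_simps)
  then have "((\<lambda>n. exp (ln (real n) + real (L n) * c)) \<longlongrightarrow> 0) sequentially"
    by (rule filterlim_compose[OF exp_at_bot])
  then show ?thesis
    by (rule Lim_transform_eventually)
       (auto intro!: eventually_mono[OF eventually_ge_at_top[of "1::nat"]] simp: exp_add)
qed

lemma eventually_powr_le_n_exp_L: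
  assumes "1 + \<rho> * c > 0"
  shows "eventually (\<lambda>n. real n powr ((1 + \<rho> * c) / 2) \<le> real n * exp (real (L n) * c)) sequentially"
proof -
  have "((\<lambda>n. 1 + real (L n) / ln (real n) * c) \<longlongrightarrow> 1 + \<rho> * c) sequentially"
    by (intro tendsto_intros ratio)
  then have "eventually (\<lambda>n. (1 + \<rho> * c) / 2 < 1 + real (L n) / ln (real n) * c) sequentially"
    using assms by (intro order_tendstoD(1)) auto
  then show ?thesis using eventually_ln_pos
  proof eventually_elim
    case (elim n)
    then have "(1 + \<rho> * c) / 2 * ln (real n) \<le> ln (real n) + real (L n) * c"
      using mult_right_mono[of "(1 + \<rho> * c) / 2" "1 + real (L n) / ln (real n) * c" "ln (real n)"]
      by (simp add: field_simps)
    then have "exp ((1 + \<rho> * c) / 2 * ln (real n)) \<le> exp (ln (real n) + real (L n) * c)"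
      by simp
    moreover have "0 < n" using elim by (cases n) auto
    ultimately show ?case by (simp add: powr_def exp_add mult.commute)
  qed
qed

lemma filterlim_L_at_top:
  assumes "\<rho> > 0"
  shows "filterlim (\<lambda>n. real (L n)) at_top sequentially"
proof -
  have "filterlim (\<lambda>n. real (L n) / ln (real n) * ln (real n)) at_top sequentially"
    by (rule filterlim_tendsto_pos_mult_at_top[OF ratio assms])
       (rule filterlim_compose[OF ln_at_top filterlim_real_sequentially])
  then show ?thesis
    by (rule filterlim_cong[THEN iffD1, rotated 3]) (auto intro: eventually_mono[OF eventually_ln_pos])
qed

lemma eventually_L_le: "eventually (\<lambda>n. real (L n) \<le> (\<rho> + 1) * ln (real n)) sequentially"
  using order_tendstoD(2)[OF ratio less_add_one] eventually_ln_pos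
  by eventually_elim (simp add: field_simps)

end

section \<open>Isolated nodes in the binary model\<close>

locale binary_mag =
  fixes p :: real and q :: "nat \<Rightarrow> nat \<Rightarrow> real"
  assumes p: "0 < p" "p < 1"
    and q_sym: "q 0 1 = q 1 0"
    and q_range: "\<And>a b. a \<in> {0, 1} \<Longrightarrow> b \<in> {0, 1} \<Longrightarrow> 0 < q a b \<and> q a b < 1"
begin

lemma q_b2n: "0 < q (b2n x) (b2n y)" "q (b2n x) (b2n y) < 1"
  using q_range[of "b2n x" "b2n y"] by (auto simp: b2n_def)

lemma QL_nonneg: "0 \<le> QL q L a b"
  unfolding QL_def by (intro prod_nonneg) (auto intro: less_imp_le q_b2n)

lemma QL_le_1: "QL q L a b \<le> 1"
  unfolding QL_def by (intro prod_le_1) (auto intro: less_imp_le q_b2n)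

lemma QL_commute: "QL q L a b = QL q L b a"
  unfolding QL_def using q_sym by (intro prod.cong refl) (auto simp: b2n_def)

lemma QL_min_max: "QL q L (A (min u v)) (A (max u v)) = QL q L (A u) (A v)"
  by (auto simp: min_def max_def QL_commute)

lemma Gam_pos: "a \<in> {0, 1} \<Longrightarrow> 0 < Gam p q a"
  using p q_range by (auto simp: Gam_def intro!: add_pos_pos)

lemma Gam_less_1: "a \<in> {0, 1} \<Longrightarrow> Gam p q a < 1"
proof -
  assume a: "a \<in> {0, 1}"
  then have "q a 0 * (1 - p) + q a 1 * p < 1 * (1 - p) + 1 * p"
    using p q_range[of a 0] q_range[of a 1] by (intro add_strict_mono mult_strict_right_mono) auto
  then show ?thesis by (simp add: Gam_def)
qed

lemma Gam_b2n: "0 < Gam p q (b2n x)" "Gam p q (b2n x) < 1"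
  using Gam_pos[of 0] Gam_pos[of 1] Gam_less_1[of 0] Gam_less_1[of 1] by (auto simp: b2n_def)

definition link_prob :: "nat \<Rightarrow> (nat \<Rightarrow> bool) \<Rightarrow> real" where
  "link_prob L a = (\<Prod>l\<in>{1..L}. Gam p q (b2n (a l)))"

definition link_exponent :: "real \<Rightarrow> real" where
  "link_exponent \<nu> = \<nu> * ln (Gam p q 1) + (1 - \<nu>) * ln (Gam p q 0)"

lemma expectation_QL: "measure_pmf.expectation (attr_pmf p L) (QL q L a) = link_prob L a"
proof -
  have "measure_pmf.expectation (attr_pmf p L) (QL q L a)
      = (\<Prod>l\<in>{1..L}. measure_pmf.expectation (bernoulli_pmf p) (\<lambda>y. q (b2n (a l)) (b2n y)))"
    unfolding attr_pmf_def QL_def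
    by (rule expectation_prod_Pi_pmf) (auto intro: integrable_measure_pmf_finite less_imp_le q_b2n)
  also have "\<dots> = link_prob L a"
    using p unfolding link_prob_def by (intro prod.cong refl) (simp add: Gam_def b2n_def)
  finally show ?thesis .
qed

lemma link_prob_pos: "0 < link_prob L a"
  unfolding link_prob_def by (intro prod_pos) (auto intro: Gam_b2n)

lemma link_prob_le_1: "link_prob L a \<le> 1"
  unfolding link_prob_def by (intro prod_le_1) (auto intro: less_imp_le Gam_b2n)

lemma link_prob_eq_exp:
  "link_prob L a = exp (real (ones_count L a) * ln (Gam p q 1) + (real L - real (ones_count L a)) * ln (Gam p q 0))"
proof -
  let ?K = "ones_count L a"
  have "link_prob L a = (\<Prod>l\<in>{1..L} \<inter> {l. a l}. Gam p q 1) * (\<Prod>l\<in>{1..L} \<inter> - {l. a l}. Gam p q 0)"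
    unfolding link_prob_def by (subst prod.If_cases[symmetric]) (auto intro: prod.cong simp: b2n_def)
  also have "\<dots> = Gam p q 1 ^ ?K * Gam p q 0 ^ (L - ?K)"
  proof -
    have "card ({1..L} \<inter> {l. a l}) = ?K"
      unfolding ones_count_def by (rule arg_cong[where f=card]) auto
    moreover have "{1..L} \<inter> - {l. a l} = {1..L} - {l\<in>{1..L}. a l}" by auto
    moreover have "card ({1..L} - {l\<in>{1..L}. a l}) = L - ?K"
      unfolding ones_count_def by (subst card_Diff_subset) auto
    ultimately show ?thesis by (simp only: prod_constant)
  qed
  also have "\<dots> = exp (real ?K * ln (Gam p q 1) + real (L - ?K) * ln (Gam p q 0))"
    using Gam_pos[of 0] Gam_pos[of 1] by (simp add: exp_add exp_of_nat_mult)
  also have "real (L - ?K) = real L - real ?K"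
    by (rule of_nat_diff) (auto simp: ones_count_def intro: order.trans[OF card_mono[of "{1..L}"]])
  finally show ?thesis .
qed

lemma ln_link_prob:
  "ln (link_prob L a)
     = real L * link_exponent \<nu> + (real (ones_count L a) - \<nu> * real L) * (ln (Gam p q 1) - ln (Gam p q 0))"
  by (simp add: link_prob_eq_exp link_exponent_def algebra_simps)

lemma link_prob_ge_exp:
  assumes "Gam p q 0 \<le> Gam p q 1" "\<nu> * real L \<le> real (ones_count L a)"
  shows "exp (real L * link_exponent \<nu>) \<le> link_prob L a"
proof -
  have "0 \<le> (real (ones_count L a) - \<nu> * real L) * (ln (Gam p q 1) - ln (Gam p q 0))"
    using assms Gam_pos[of 0] by (intro mult_nonneg_nonneg) auto
  then have "exp (real L * link_exponent \<nu>) \<le> exp (ln (link_prob L a))"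
    using ln_link_prob[of L a \<nu>] by simp
  then show ?thesis using link_prob_pos[of L a] by simp
qed

lemma link_prob_le_exp:
  assumes "Gam p q 0 \<le> Gam p q 1" "real (ones_count L a) \<le> \<nu> * real L"
  shows "link_prob L a \<le> exp (real L * link_exponent \<nu>)"
proof -
  have "(real (ones_count L a) - \<nu> * real L) * (ln (Gam p q 1) - ln (Gam p q 0)) \<le> 0"
    using assms Gam_pos[of 0] by (intro mult_nonpos_nonneg) auto
  then have "exp (ln (link_prob L a)) \<le> exp (real L * link_exponent \<nu>)"
    using ln_link_prob[of L a \<nu>] by simp
  then show ?thesis using link_prob_pos[of L a] by simp
qed

lemma ln_Gam_powr_eq_link_exponent:
  "ln (Gam p q 1 powr \<nu> * Gam p q 0 powr (1 - \<nu>)) = link_exponent \<nu>"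
  using Gam_pos[of 0] Gam_pos[of 1] by (simp add: ln_mult ln_powr link_exponent_def)

lemma prob_isolated_given_attrs:
  assumes u: "u \<in> {1..n}"
  shows "measure_pmf.prob (edges_pmf q L n A) {E. \<forall>v\<in>{1..n}-{u}. \<not> E (min u v, max u v)}
       = (\<Prod>v\<in>{1..n}-{u}. 1 - QL q L (A u) (A v))"
proof -
  define e where "e = (\<lambda>v. (min u v, max u v))"
  have inj: "inj_on e ({1..n} - {u})"
    by (auto simp: inj_on_def e_def min_def max_def split: if_splits)
  have sub: "e ` ({1..n} - {u}) \<subseteq> node_pairs n"
    using u by (auto simp: e_def node_pairs_def min_def max_def)
  have "{E. \<forall>v\<in>{1..n}-{u}. \<not> E (min u v, max u v)} = {E. \<forall>x\<in>e ` ({1..n} - {u}). \<not> E x}"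
    by (auto simp: e_def)
  then have "measure_pmf.prob (edges_pmf q L n A) {E. \<forall>v\<in>{1..n}-{u}. \<not> E (min u v, max u v)}
      = (\<Prod>x\<in>e ` ({1..n} - {u}). 1 - QL q L (A (fst x)) (A (snd x)))"
    unfolding edges_pmf_def split_beta'
    by (simp only:, intro prob_Pi_pmf_bernoulli_all_False finite_node_pairs sub)
       (auto intro: QL_nonneg QL_le_1)
  also have "\<dots> = (\<Prod>v\<in>{1..n}-{u}. 1 - QL q L (A u) (A v))"
    unfolding prod.reindex[OF inj] by (simp add: e_def QL_min_max)
  finally show ?thesis .
qed

lemma expectation_edge_given_attrs:
  assumes uv: "u \<in> {1..n}" "v \<in> {1..n}" "u \<noteq> v"
  shows "measure_pmf.expectation (edges_pmf q L n A) (\<lambda>E. of_bool (E (min u v, max u v)))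
       = QL q L (A u) (A v)"
proof -
  have "(min u v, max u v) \<in> node_pairs n" using uv by (auto simp: node_pairs_def min_def max_def)
  then have edge: "map_pmf (\<lambda>E. E (min u v, max u v)) (edges_pmf q L n A) = bernoulli_pmf (QL q L (A u) (A v))"
    unfolding edges_pmf_def by (subst Pi_pmf_component) (auto simp: finite_node_pairs QL_min_max)
  have "measure_pmf.expectation (edges_pmf q L n A) (\<lambda>E. of_bool (E (min u v, max u v)) :: real)
      = measure_pmf.expectation (map_pmf (\<lambda>E. E (min u v, max u v)) (edges_pmf q L n A)) of_bool"
    by (simp add: integral_map_pmf)
  also have "\<dots> = QL q L (A u) (A v)"
    unfolding edge by (subst integral_bernoulli_pmf) (simp_all add: QL_nonneg QL_le_1)
  finally show ?thesis .
qed

lemma prob_has_isolated_given_attrs_le: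
  "measure_pmf.prob (edges_pmf q L n A) {E. \<not> no_isolated n E}
     \<le> (\<Sum>u\<in>{1..n}. \<Prod>v\<in>{1..n}-{u}. 1 - QL q L (A u) (A v))"
proof -
  have "{E. \<not> no_isolated n E} = (\<Union>u\<in>{1..n}. {E. \<forall>v\<in>{1..n}-{u}. \<not> E (min u v, max u v)})"
    unfolding no_isolated_def by auto
  then have "measure_pmf.prob (edges_pmf q L n A) {E. \<not> no_isolated n E}
      \<le> (\<Sum>u\<in>{1..n}. measure_pmf.prob (edges_pmf q L n A) {E. \<forall>v\<in>{1..n}-{u}. \<not> E (min u v, max u v)})"
    by (simp only:) (rule measure_pmf.finite_measure_subadditive_finite; simp)
  also have "\<dots> = (\<Sum>u\<in>{1..n}. \<Prod>v\<in>{1..n}-{u}. 1 - QL q L (A u) (A v))"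
    by (intro sum.cong refl prob_isolated_given_attrs)
  finally show ?thesis .
qed

text \<open>A node with attributes \<open>a\<close> misses each of the other \<open>n - 1\<close> nodes independently
  with probability \<open>1 - link_prob L a\<close>.\<close>

lemma expectation_prob_isolated:
  assumes u: "u \<in> {1..n}"
  shows "measure_pmf.expectation (attrs_pmf p n L) (\<lambda>A. \<Prod>v\<in>{1..n}-{u}. 1 - QL q L (A u) (A v))
       = measure_pmf.expectation (attr_pmf p L) (\<lambda>a. (1 - link_prob L a) ^ (n - 1))"
proof -
  have "measure_pmf.expectation (attrs_pmf p n L) (\<lambda>A. 1 * (\<Prod>v\<in>{1..n}-{u}. 1 - QL q L (A u) (A v)))
      = measure_pmf.expectation (attr_pmf p L)
          (\<lambda>a. 1 * (\<Prod>v\<in>{1..n}-{u}. measure_pmf.expectation (attr_pmf p L) (\<lambda>b. 1 - QL q L a b)))"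
    unfolding attrs_pmf_def using u QL_nonneg QL_le_1
    by (intro expectation_Pi_pmf_given_component) (auto simp: finite_set_attr_pmf)
  also have "\<dots> = measure_pmf.expectation (attr_pmf p L) (\<lambda>a. (1 - link_prob L a) ^ (n - 1))"
    using u by (simp add: expectation_QL integrable_measure_pmf_finite finite_set_attr_pmf
                          Bochner_Integration.integral_diff)
  finally show ?thesis by simp
qed

lemma prob_has_isolated_le:
  "measure_pmf.prob (mag_pmf p q n L) {E. \<not> no_isolated n E}
     \<le> real n * measure_pmf.expectation (attr_pmf p L) (\<lambda>a. (1 - link_prob L a) ^ (n - 1))"
proof -
  have "measure_pmf.prob (mag_pmf p q n L) {E. \<not> no_isolated n E}
      = measure_pmf.expectation (attrs_pmf p n L) (\<lambda>A. measure_pmf.prob (edges_pmf q L n A) {E. \<not> no_isolated n E})"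
    unfolding mag_pmf_eq_bind by (rule prob_bind_pmf)
  also have "\<dots> \<le> measure_pmf.expectation (attrs_pmf p n L)
      (\<lambda>A. \<Sum>u\<in>{1..n}. \<Prod>v\<in>{1..n}-{u}. 1 - QL q L (A u) (A v))"
    by (intro integral_mono integrable_measure_pmf_finite finite_set_attrs_pmf prob_has_isolated_given_attrs_le)
  also have "\<dots> = (\<Sum>u\<in>{1..n}. measure_pmf.expectation (attrs_pmf p n L)
      (\<lambda>A. \<Prod>v\<in>{1..n}-{u}. 1 - QL q L (A u) (A v)))"
    by (simp add: Bochner_Integration.integral_sum integrable_measure_pmf_finite finite_set_attrs_pmf)
  also have "\<dots> = (\<Sum>u\<in>{1..n}. measure_pmf.expectation (attr_pmf p L) (\<lambda>a. (1 - link_prob L a) ^ (n - 1)))"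
    by (rule sum.cong[OF refl expectation_prob_isolated])
  finally show ?thesis by simp
qed

text \<open>Markov's inequality for the degree sum of \<open>S\<close>: without isolated nodes it is at least \<open>card S\<close>.\<close>

lemma prob_no_isolated_given_attrs_le:
  assumes S: "S \<subseteq> {1..n}" "S \<noteq> {}"
  shows "measure_pmf.prob (edges_pmf q L n A) {E. no_isolated n E}
     \<le> (\<Sum>u\<in>S. \<Sum>v\<in>{1..n}-{u}. QL q L (A u) (A v)) / real (card S)"
proof -
  define N where "N = {1..n}"
  define Y where "Y = (\<lambda>E. (\<Sum>u\<in>S. \<Sum>v\<in>N-{u}. of_bool (E (min u v, max u v))) / real (card S))"
  have finS: "finite S" "card S > 0" using S by (auto simp: card_gt_0_iff intro: finite_subset)
  have "indicator {E. no_isolated n E} E \<le> Y E" for E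
  proof (cases "no_isolated n E")
    case True
    have "real (card S) = (\<Sum>u\<in>S. 1)" by simp
    also have "\<dots> \<le> (\<Sum>u\<in>S. \<Sum>v\<in>N-{u}. of_bool (E (min u v, max u v)))"
    proof (intro sum_mono)
      fix u assume "u \<in> S"
      then obtain v where "v \<in> N - {u}" "E (min u v, max u v)"
        using True S unfolding no_isolated_def N_def by blast
      then show "1 \<le> (\<Sum>v\<in>N-{u}. of_bool (E (min u v, max u v)) :: real)"
        using member_le_sum[of v "N - {u}" "\<lambda>v. of_bool (E (min u v, max u v)) :: real"]
        by (simp add: N_def)
    qed
    finally show ?thesis using True finS by (simp add: Y_def)
  qed (simp add: Y_def sum_nonneg)
  then have "measure_pmf.prob (edges_pmf q L n A) {E. no_isolated n E}
      \<le> measure_pmf.expectation (edges_pmf q L n A) Y"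
    by (intro prob_le_expectation_pmf integrable_measure_pmf_finite finite_set_edges_pmf)
  also have "\<dots> = (\<Sum>u\<in>S. \<Sum>v\<in>N-{u}. QL q L (A u) (A v)) / real (card S)"
    using S by (auto simp: Y_def Bochner_Integration.integral_sum integrable_measure_pmf_finite
                  finite_set_edges_pmf N_def expectation_edge_given_attrs intro!: sum.cong
                  simp del: sum_of_bool_eq)
  finally show ?thesis by (simp add: N_def)
qed

lemma prob_no_isolated_given_attrs_le_light:
  assumes "0 < \<mu>"
  shows "measure_pmf.prob (edges_pmf q L n A) {E. no_isolated n E}
     \<le> of_bool (real (card {u\<in>{1..n}. P (A u)}) \<le> \<mu> / 2)
       + 2 / \<mu> * (\<Sum>u\<in>{1..n}. \<Sum>v\<in>{1..n}-{u}. of_bool (P (A u)) * QL q L (A u) (A v))"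
proof (cases "real (card {u\<in>{1..n}. P (A u)}) \<le> \<mu> / 2")
  case True
  then show ?thesis
    using assms by (simp add: add_increasing2 sum_nonneg QL_nonneg)
next
  case False
  define S where "S = {u\<in>{1..n}. P (A u)}"
  have S: "\<mu> / 2 < real (card S)" using False by (simp add: S_def)
  then have "S \<noteq> {}" using assms by auto
  have "(\<Sum>u\<in>{1..n}. \<Sum>v\<in>{1..n}-{u}. of_bool (P (A u)) * QL q L (A u) (A v))
      = (\<Sum>u\<in>{1..n}. if P (A u) then \<Sum>v\<in>{1..n}-{u}. QL q L (A u) (A v) else 0)"
    by (intro sum.cong refl) (auto simp: sum_distrib_left[symmetric])
  also have "\<dots> = (\<Sum>u\<in>S. \<Sum>v\<in>{1..n}-{u}. QL q L (A u) (A v))"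
    unfolding S_def by (rule sum.inter_filter[symmetric]) simp
  finally have light_sum: "(\<Sum>u\<in>{1..n}. \<Sum>v\<in>{1..n}-{u}. of_bool (P (A u)) * QL q L (A u) (A v))
      = (\<Sum>u\<in>S. \<Sum>v\<in>{1..n}-{u}. QL q L (A u) (A v))" .
  have "measure_pmf.prob (edges_pmf q L n A) {E. no_isolated n E}
      \<le> (\<Sum>u\<in>S. \<Sum>v\<in>{1..n}-{u}. QL q L (A u) (A v)) / real (card S)"
    using \<open>S \<noteq> {}\<close> by (intro prob_no_isolated_given_attrs_le) (auto simp: S_def)
  also have "\<dots> \<le> (\<Sum>u\<in>S. \<Sum>v\<in>{1..n}-{u}. QL q L (A u) (A v)) / (\<mu> / 2)"
    using S assms by (intro divide_left_mono sum_nonneg QL_nonneg) auto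
  finally show ?thesis using False unfolding light_sum by (simp add: mult.commute)
qed

lemma expectation_light_edge_le:
  assumes uv: "u \<in> {1..n}" "v \<in> {1..n}" "u \<noteq> v" and B: "\<And>a. P a \<Longrightarrow> link_prob L a \<le> B"
  shows "measure_pmf.expectation (attrs_pmf p n L) (\<lambda>A. of_bool (P (A u)) * QL q L (A u) (A v))
      \<le> measure_pmf.prob (attr_pmf p L) {a. P a} * B"
proof -
  define N where "N = {1..n}"
  have "measure_pmf.expectation (attrs_pmf p n L) (\<lambda>A. of_bool (P (A u)) * QL q L (A u) (A v))
      = measure_pmf.expectation (attrs_pmf p n L)
          (\<lambda>A. of_bool (P (A u)) * (\<Prod>w\<in>N-{u}. (\<lambda>w a b. if w = v then QL q L a b else 1) w (A u) (A w)))"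
    using uv by (simp add: N_def if_distrib prod.If_cases Int_absorb2 cong: if_cong)
  also have "\<dots> = measure_pmf.expectation (attr_pmf p L) (\<lambda>a. of_bool (P a) *
      (\<Prod>w\<in>N-{u}. measure_pmf.expectation (attr_pmf p L) (\<lambda>b. if w = v then QL q L a b else 1)))"
    unfolding attrs_pmf_def N_def using uv QL_nonneg QL_le_1
    by (intro expectation_Pi_pmf_given_component) (auto simp: finite_set_attr_pmf)
  also have "\<dots> = measure_pmf.expectation (attr_pmf p L) (\<lambda>a. of_bool (P a) * link_prob L a)"
  proof (intro Bochner_Integration.integral_cong refl arg_cong2[where f="(*)"])
    fix a
    have "(\<Prod>w\<in>N-{u}. measure_pmf.expectation (attr_pmf p L) (\<lambda>b. if w = v then QL q L a b else 1))
        = (\<Prod>w\<in>N-{u}. if w = v then link_prob L a else 1)"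
      by (intro prod.cong refl) (simp add: expectation_QL)
    also have "\<dots> = link_prob L a" using uv by (simp add: N_def)
    finally show "(\<Prod>w\<in>N-{u}. measure_pmf.expectation (attr_pmf p L) (\<lambda>b. if w = v then QL q L a b else 1))
        = link_prob L a" .
  qed
  also have "\<dots> \<le> measure_pmf.expectation (attr_pmf p L) (\<lambda>a. indicator {a. P a} a * B)"
    by (intro integral_mono integrable_measure_pmf_finite finite_set_attr_pmf) (auto simp: B)
  also have "\<dots> = measure_pmf.prob (attr_pmf p L) {a. P a} * B"
    by simp
  finally show ?thesis .
qed

lemma expectation_light_degree_sum_le:
  assumes B: "\<And>a. P a \<Longrightarrow> link_prob L a \<le> B"
  shows "measure_pmf.expectation (attrs_pmf p n L)
           (\<lambda>A. \<Sum>u\<in>{1..n}. \<Sum>v\<in>{1..n}-{u}. of_bool (P (A u)) * QL q L (A u) (A v))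
       \<le> real n * real (n - 1) * (measure_pmf.prob (attr_pmf p L) {a. P a} * B)"
proof -
  have "measure_pmf.expectation (attrs_pmf p n L)
           (\<lambda>A. \<Sum>u\<in>{1..n}. \<Sum>v\<in>{1..n}-{u}. of_bool (P (A u)) * QL q L (A u) (A v))
      = (\<Sum>u\<in>{1..n}. \<Sum>v\<in>{1..n}-{u}.
           measure_pmf.expectation (attrs_pmf p n L) (\<lambda>A. of_bool (P (A u)) * QL q L (A u) (A v)))"
    by (simp add: Bochner_Integration.integral_sum integrable_measure_pmf_finite finite_set_attrs_pmf
             del: sum_mult_of_bool_eq sum_of_bool_mult_eq)
  also have "\<dots> \<le> (\<Sum>u\<in>{1..n}. \<Sum>v\<in>{1..n}-{u}. measure_pmf.prob (attr_pmf p L) {a. P a} * B)"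
    by (intro sum_mono expectation_light_edge_le B) auto
  also have "\<dots> = real n * real (n - 1) * (measure_pmf.prob (attr_pmf p L) {a. P a} * B)"
    by (cases n) simp_all
  finally show ?thesis .
qed

text \<open>Call the nodes satisfying \<open>P\<close> light: either there are few of them (Chernoff), or Markov's
  inequality applies to their degree sum.\<close>

lemma prob_no_isolated_le:
  assumes \<mu>: "\<mu> = real n * measure_pmf.prob (attr_pmf p L) {a. P a}" "0 < \<mu>"
    and B: "\<And>a. P a \<Longrightarrow> link_prob L a \<le> B"
  shows "measure_pmf.prob (mag_pmf p q n L) {E. no_isolated n E} \<le> exp (\<mu> * (ln 2 - 1) / 2) + 2 * real n * B"
proof -
  define \<pi> where "\<pi> = measure_pmf.prob (attr_pmf p L) {a. P a}"
  define light where "light = {A. real (card {u\<in>{1..n}. P (A u)}) \<le> \<mu> / 2}"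
  define T where "T = (\<lambda>A. \<Sum>u\<in>{1..n}. \<Sum>v\<in>{1..n}-{u}. of_bool (P (A u)) * QL q L (A u) (A v))"
  have "\<pi> \<noteq> 0" "n \<noteq> 0" using \<mu> by (cases "n = 0"; auto simp: \<pi>_def)+
  then obtain a where "P a" by (metis Collect_empty_eq \<pi>_def measure_empty)
  then have "0 \<le> B" using B[of a] link_prob_pos[of L a] by simp
  have "measure_pmf.prob (mag_pmf p q n L) {E. no_isolated n E}
      = measure_pmf.expectation (attrs_pmf p n L) (\<lambda>A. measure_pmf.prob (edges_pmf q L n A) {E. no_isolated n E})"
    unfolding mag_pmf_eq_bind by (rule prob_bind_pmf)
  also have "\<dots> \<le> measure_pmf.expectation (attrs_pmf p n L) (\<lambda>A. indicator light A + 2 / \<mu> * T A)"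
    using prob_no_isolated_given_attrs_le_light[OF \<mu>(2), of L n _ P]
    by (intro integral_mono integrable_measure_pmf_finite finite_set_attrs_pmf)
       (simp_all add: light_def T_def indicator_def)
  also have "\<dots> = measure_pmf.prob (attrs_pmf p n L) light + 2 / \<mu> * measure_pmf.expectation (attrs_pmf p n L) T"
    by (simp add: Bochner_Integration.integral_add integrable_measure_pmf_finite finite_set_attrs_pmf)
  also have "\<dots> \<le> exp (\<mu> * (ln 2 - 1) / 2) + 2 / \<mu> * (real n * real (n - 1) * (\<pi> * B))"
  proof (intro add_mono mult_left_mono)
    show "measure_pmf.prob (attrs_pmf p n L) light \<le> exp (\<mu> * (ln 2 - 1) / 2)"
      unfolding light_def attrs_pmf_def using \<mu>(1) by (intro prob_Pi_pmf_count_le_half_mean) auto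
    show "measure_pmf.expectation (attrs_pmf p n L) T \<le> real n * real (n - 1) * (\<pi> * B)"
      unfolding T_def \<pi>_def by (rule expectation_light_degree_sum_le[OF B])
  qed (use \<mu> in auto)
  also have "2 / \<mu> * (real n * real (n - 1) * (\<pi> * B)) = 2 * real (n - 1) * B"
    using \<open>\<pi> \<noteq> 0\<close> \<open>n \<noteq> 0\<close> by (simp add: \<mu> \<pi>_def)
  also have "\<dots> \<le> 2 * real n * B"
    using \<open>0 \<le> B\<close> by (intro mult_right_mono) auto
  finally show ?thesis by simp
qed

lemma prob_has_isolated_le_exp:
  assumes \<Gamma>: "Gam p q 0 \<le> Gam p q 1" and \<nu>: "0 < \<nu>" "\<nu> < p"
  shows "measure_pmf.prob (mag_pmf p q n L) {E. \<not> no_isolated n E}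
     \<le> real n * exp (real L * lnG p \<nu>)
       + real n * exp (- (real n - 1) * exp (real L * link_exponent \<nu>))"
proof -
  define B where "B = exp (real L * link_exponent \<nu>)"
  define heavy where "heavy = {a. \<nu> * real L < real (ones_count L a)}"
  have "(1 - link_prob L a) ^ (n - 1) \<le> indicator (- heavy) a + exp (- (real n - 1) * B)" for a
  proof (cases "a \<in> heavy")
    case True
    then have "B \<le> link_prob L a" unfolding B_def heavy_def by (intro link_prob_ge_exp[OF \<Gamma>]) auto
    have "(1 - link_prob L a) ^ (n - 1) \<le> exp (- link_prob L a) ^ (n - 1)"
      using link_prob_le_1 exp_ge_add_one_self[of "- link_prob L a"] by (intro power_mono) auto
    also have "\<dots> = exp (- real (n - 1) * link_prob L a)" by (simp add: exp_of_nat_mult[symmetric])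
    also have "\<dots> \<le> exp (- (real n - 1) * B)"
      using \<open>B \<le> link_prob L a\<close> by (cases n) (auto simp: B_def mult_left_mono)
    finally show ?thesis using True by simp
  next
    case False
    have "(1 - link_prob L a) ^ (n - 1) \<le> 1"
      using link_prob_pos link_prob_le_1 by (intro power_le_one) (auto simp: less_imp_le)
    then show ?thesis using False by (simp add: add_increasing2)
  qed
  then have "measure_pmf.expectation (attr_pmf p L) (\<lambda>a. (1 - link_prob L a) ^ (n - 1))
      \<le> measure_pmf.expectation (attr_pmf p L) (\<lambda>a. indicator (- heavy) a + exp (- (real n - 1) * B))"
    by (intro integral_mono integrable_measure_pmf_finite finite_set_attr_pmf)
  also have "\<dots> = measure_pmf.prob (attr_pmf p L) (- heavy) + exp (- (real n - 1) * B)"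
    by (simp add: Bochner_Integration.integral_add integrable_measure_pmf_finite finite_set_attr_pmf)
  also have "measure_pmf.prob (attr_pmf p L) (- heavy) \<le> exp (real L * lnG p \<nu>)"
    unfolding heavy_def using prob_ones_count_le_exp_lnG[OF p \<nu>, of L] by (simp add: Compl_eq not_less)
  finally have "measure_pmf.expectation (attr_pmf p L) (\<lambda>a. (1 - link_prob L a) ^ (n - 1))
      \<le> exp (real L * lnG p \<nu>) + exp (- (real n - 1) * B)" by simp
  then have "real n * measure_pmf.expectation (attr_pmf p L) (\<lambda>a. (1 - link_prob L a) ^ (n - 1))
      \<le> real n * (exp (real L * lnG p \<nu>) + exp (- (real n - 1) * B))"
    by (rule mult_left_mono) simp
  then show ?thesis using prob_has_isolated_le[of n L] by (simp add: B_def distrib_left)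
qed

lemma prob_no_isolated_le_exp:
  assumes \<Gamma>: "Gam p q 0 \<le> Gam p q 1" and \<nu>: "0 < \<nu>'" "\<nu>' < \<nu>" "\<nu> < p"
    and L: "1 \<le> (\<nu> - \<nu>') * real L" and n: "n \<ge> 1"
  shows "measure_pmf.prob (mag_pmf p q n L) {E. no_isolated n E}
     \<le> exp (real n * exp (real L * lnG p \<nu>') / (real L + 1) * ((ln 2 - 1) / 2))
       + 2 * real n * exp (real L * link_exponent \<nu>)"
proof -
  define \<pi> where "\<pi> = measure_pmf.prob (attr_pmf p L) {a. real (ones_count L a) \<le> \<nu> * real L}"
  define m where "m = real n * (exp (real L * lnG p \<nu>') / (real L + 1))"
  have "m \<le> real n * \<pi>"
    unfolding m_def \<pi>_def by (intro mult_left_mono prob_ones_count_le_ge_exp_lnG[OF p \<nu> L]) simp_all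
  moreover have "0 < m" using n by (simp add: m_def add_pos_nonneg)
  ultimately have "measure_pmf.prob (mag_pmf p q n L) {E. no_isolated n E}
      \<le> exp (real n * \<pi> * (ln 2 - 1) / 2) + 2 * real n * exp (real L * link_exponent \<nu>)"
    unfolding \<pi>_def by (intro prob_no_isolated_le link_prob_le_exp[OF \<Gamma>]) auto
  also have "exp (real n * \<pi> * (ln 2 - 1) / 2) \<le> exp (m * ((ln 2 - 1) / 2))"
    using \<open>m \<le> real n * \<pi>\<close> ln_2_less_1 by (simp add: mult_right_mono_neg)
  finally show ?thesis by (simp add: m_def)
qed

lemma prob_has_isolated_vanishes:
  assumes \<Gamma>: "Gam p q 0 \<le> Gam p q 1" and ratio: "((\<lambda>n. real (L n) / ln (real n)) \<longlongrightarrow> \<rho>) sequentially"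
    and \<nu>: "0 < \<nu>" "\<nu> < p" and rare: "1 + \<rho> * lnG p \<nu> < 0" and dense: "1 + \<rho> * link_exponent \<nu> > 0"
  shows "((\<lambda>n. measure_pmf.prob (mag_pmf p q n (L n)) {E. \<not> no_isolated n E}) \<longlongrightarrow> 0) sequentially"
proof -
  define \<delta> where "\<delta> = (1 + \<rho> * link_exponent \<nu>) / 2"
  define isolated_heavy where
    "isolated_heavy = (\<lambda>n. real n * exp (- (real n - 1) * exp (real (L n) * link_exponent \<nu>)))"
  have "\<delta> > 0" using dense by (simp add: \<delta>_def)
  then have lim: "((\<lambda>n::nat. real n * exp (- (real n powr \<delta>) / 2)) \<longlongrightarrow> 0) sequentially"
    by real_asymp
  have "eventually (\<lambda>n. 0 \<le> isolated_heavy n) sequentially" by (simp add: isolated_heavy_def)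
  moreover have "eventually (\<lambda>n. isolated_heavy n \<le> real n * exp (- (real n powr \<delta>) / 2)) sequentially"
    using eventually_powr_le_n_exp_L[OF ratio dense] eventually_ge_at_top[of "2::nat"]
  proof eventually_elim
    case (elim n)
    have "real n powr \<delta> / 2 \<le> real n / 2 * exp (real (L n) * link_exponent \<nu>)"
      using elim by (simp add: \<delta>_def)
    also have "\<dots> \<le> (real n - 1) * exp (real (L n) * link_exponent \<nu>)"
      using elim by (intro mult_right_mono) auto
    finally have "- (real n - 1) * exp (real (L n) * link_exponent \<nu>) \<le> - (real n powr \<delta>) / 2"
      by linarith
    then have "exp (- (real n - 1) * exp (real (L n) * link_exponent \<nu>)) \<le> exp (- (real n powr \<delta>) / 2)"
      by (rule exp_mono)
    then show ?case unfolding isolated_heavy_def by (intro mult_left_mono) auto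
  qed
  ultimately have "isolated_heavy \<longlonglongrightarrow> 0" using tendsto_const lim by (rule tendsto_sandwich)
  then have bound: "((\<lambda>n. real n * exp (real (L n) * lnG p \<nu>) + isolated_heavy n) \<longlongrightarrow> 0) sequentially"
    using tendsto_add[OF n_exp_L_tendsto_0[OF ratio rare]] by simp
  have "eventually (\<lambda>n. 0 \<le> measure_pmf.prob (mag_pmf p q n (L n)) {E. \<not> no_isolated n E}) sequentially"
    by simp
  moreover have "eventually (\<lambda>n. measure_pmf.prob (mag_pmf p q n (L n)) {E. \<not> no_isolated n E}
      \<le> real n * exp (real (L n) * lnG p \<nu>) + isolated_heavy n) sequentially"
    unfolding isolated_heavy_def by (intro always_eventually allI prob_has_isolated_le_exp[OF \<Gamma> \<nu>])
  ultimately show ?thesis using tendsto_const bound by (rule tendsto_sandwich)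
qed


lemma prob_no_isolated_vanishes:
  assumes \<Gamma>: "Gam p q 0 \<le> Gam p q 1" and ratio: "((\<lambda>n. real (L n) / ln (real n)) \<longlongrightarrow> \<rho>) sequentially"
    and \<rho>: "\<rho> > 0" and \<nu>: "0 < \<nu>'" "\<nu>' < \<nu>" "\<nu> < p"
    and frequent: "1 + \<rho> * lnG p \<nu>' > 0" and sparse: "1 + \<rho> * link_exponent \<nu> < 0"
  shows "((\<lambda>n. measure_pmf.prob (mag_pmf p q n (L n)) {E. no_isolated n E}) \<longlongrightarrow> 0) sequentially"
proof -
  define \<delta> where "\<delta> = (1 + \<rho> * lnG p \<nu>') / 2"
  define \<kappa> :: real where "\<kappa> = (ln 2 - 1) / 2"
  define w where "w = (\<lambda>n::nat. real n powr \<delta> / ((\<rho> + 1) * ln (real n) + 1))"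
  have "\<kappa> < 0" using ln_2_less_1 by (simp add: \<kappa>_def)
  have "\<delta> > 0" using frequent by (simp add: \<delta>_def)
  then have "filterlim w at_top sequentially"
    unfolding w_def using \<rho> by real_asymp
  then have "filterlim (\<lambda>n. \<kappa> * w n) at_bot sequentially"
    by (rule filterlim_tendsto_neg_mult_at_bot[OF tendsto_const \<open>\<kappa> < 0\<close>])
  then have "((\<lambda>n. exp (\<kappa> * w n)) \<longlongrightarrow> 0) sequentially"
    by (rule filterlim_compose[OF exp_at_bot])
  then have bound: "((\<lambda>n. exp (\<kappa> * w n) + 2 * real n * exp (real (L n) * link_exponent \<nu>)) \<longlongrightarrow> 0) sequentially"
    using tendsto_add[OF _ tendsto_mult[OF tendsto_const n_exp_L_tendsto_0[OF ratio sparse]], of _ 0 2]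
    by (simp add: mult.assoc)
  have "eventually (\<lambda>n. real (L n) \<ge> 1 / (\<nu> - \<nu>')) sequentially"
    using filterlim_L_at_top[OF ratio \<rho>] by (simp add: filterlim_at_top)
  then have upper: "eventually (\<lambda>n. measure_pmf.prob (mag_pmf p q n (L n)) {E. no_isolated n E}
      \<le> exp (\<kappa> * w n) + 2 * real n * exp (real (L n) * link_exponent \<nu>)) sequentially"
    using eventually_powr_le_n_exp_L[OF ratio frequent] eventually_L_le[OF ratio] eventually_ge_at_top[of "2::nat"]
  proof eventually_elim
    case (elim n)
    have "1 \<le> (\<nu> - \<nu>') * real (L n)" using elim \<nu> by (simp add: field_simps)
    then have "measure_pmf.prob (mag_pmf p q n (L n)) {E. no_isolated n E}
        \<le> exp (real n * exp (real (L n) * lnG p \<nu>') / (real (L n) + 1) * \<kappa>)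
          + 2 * real n * exp (real (L n) * link_exponent \<nu>)"
      unfolding \<kappa>_def using elim by (intro prob_no_isolated_le_exp[OF \<Gamma> \<nu>]) auto
    moreover have "w n \<le> real n * exp (real (L n) * lnG p \<nu>') / (real (L n) + 1)"
      unfolding w_def using elim by (intro frac_le) (auto simp: \<delta>_def)
    then have "real n * exp (real (L n) * lnG p \<nu>') / (real (L n) + 1) * \<kappa> \<le> \<kappa> * w n"
      using \<open>\<kappa> < 0\<close> by (subst mult.commute, intro mult_left_mono_neg) auto
    then have "exp (real n * exp (real (L n) * lnG p \<nu>') / (real (L n) + 1) * \<kappa>) \<le> exp (\<kappa> * w n)"
      by (rule exp_mono)
    ultimately show ?case by linarith
  qed
  have "eventually (\<lambda>n. 0 \<le> measure_pmf.prob (mag_pmf p q n (L n)) {E. no_isolated n E}) sequentially"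
    by simp
  then show ?thesis using upper tendsto_const bound by (rule tendsto_sandwich)
qed

lemma prob_no_isolated_compl:
  "measure_pmf.prob M {E. no_isolated n E} = 1 - measure_pmf.prob M {E. \<not> no_isolated n E}"
  using measure_pmf.prob_compl[of "{E. \<not> no_isolated n E}" M] by (simp add: set_diff_eq)

lemma prob_no_isolated_tendsto_1:
  assumes \<Gamma>: "Gam p q 0 \<le> Gam p q 1" and ratio: "((\<lambda>n. real (L n) / ln (real n)) \<longlongrightarrow> \<rho>) sequentially"
    and \<rho>: "\<rho> > 0" and s: "0 < s" "s < p" "1 + \<rho> * lnG p s = 0"
    and dense: "1 + \<rho> * link_exponent s > 0"
  shows "((\<lambda>n. measure_pmf.prob (mag_pmf p q n (L n)) {E. no_isolated n E}) \<longlongrightarrow> 1) sequentially"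
proof -
  have "((\<lambda>\<nu>. 1 + \<rho> * link_exponent \<nu>) \<longlongrightarrow> 1 + \<rho> * link_exponent s) (at_left s)"
    unfolding link_exponent_def by (intro tendsto_intros)
  then have "eventually (\<lambda>\<nu>. 0 < 1 + \<rho> * link_exponent \<nu>) (at_left s)"
    using dense by (rule order_tendstoD)
  moreover have "eventually (\<lambda>\<nu>. \<nu> \<in> {0<..<s}) (at_left s)"
    using s by (intro eventually_at_left_real)
  ultimately have "eventually (\<lambda>\<nu>. 0 < 1 + \<rho> * link_exponent \<nu> \<and> \<nu> \<in> {0<..<s}) (at_left s)"
    by eventually_elim auto
  then obtain \<nu> where \<nu>: "0 < 1 + \<rho> * link_exponent \<nu>" "0 < \<nu>" "\<nu> < s"
    using eventually_happens'[OF trivial_limit_at_left_real] by auto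
  have "\<rho> * lnG p \<nu> < \<rho> * lnG p s" using lnG_strict_mono[OF p \<nu>(2,3)] s \<rho> by simp
  then have "1 + \<rho> * lnG p \<nu> < 0" using s(3) by linarith
  then have "((\<lambda>n. measure_pmf.prob (mag_pmf p q n (L n)) {E. \<not> no_isolated n E}) \<longlongrightarrow> 0) sequentially"
    using \<nu> s by (intro prob_has_isolated_vanishes[OF \<Gamma> ratio]) auto
  then have "((\<lambda>n. 1 - measure_pmf.prob (mag_pmf p q n (L n)) {E. \<not> no_isolated n E}) \<longlongrightarrow> 1 - 0) sequentially"
    by (intro tendsto_diff tendsto_const)
  then show ?thesis by (simp add: prob_no_isolated_compl)
qed

lemma prob_no_isolated_tendsto_0:
  assumes \<Gamma>: "Gam p q 0 \<le> Gam p q 1" and ratio: "((\<lambda>n. real (L n) / ln (real n)) \<longlongrightarrow> \<rho>) sequentially"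
    and \<rho>: "\<rho> > 0" and s: "0 < s" "s < p" "1 + \<rho> * lnG p s = 0"
    and sparse: "1 + \<rho> * link_exponent s < 0"
  shows "((\<lambda>n. measure_pmf.prob (mag_pmf p q n (L n)) {E. no_isolated n E}) \<longlongrightarrow> 0) sequentially"
proof -
  have "((\<lambda>\<nu>. 1 + \<rho> * link_exponent \<nu>) \<longlongrightarrow> 1 + \<rho> * link_exponent s) (at_right s)"
    unfolding link_exponent_def by (intro tendsto_intros)
  then have "eventually (\<lambda>\<nu>. 1 + \<rho> * link_exponent \<nu> < 0) (at_right s)"
    using sparse by (rule order_tendstoD)
  moreover have "eventually (\<lambda>\<nu>. \<nu> \<in> {s<..<p}) (at_right s)"
    using s by (intro eventually_at_right_real)
  ultimately have "eventually (\<lambda>\<nu>. 1 + \<rho> * link_exponent \<nu> < 0 \<and> \<nu> \<in> {s<..<p}) (at_right s)"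
    by eventually_elim auto
  then obtain \<nu> where \<nu>: "1 + \<rho> * link_exponent \<nu> < 0" "s < \<nu>" "\<nu> < p"
    using eventually_happens'[OF trivial_limit_at_right_real] by auto
  have "\<rho> * lnG p s < \<rho> * lnG p ((s + \<nu>) / 2)" using lnG_strict_mono[OF p, of s "(s + \<nu>) / 2"] s \<nu> \<rho> by simp
  then have "1 + \<rho> * lnG p ((s + \<nu>) / 2) > 0" using s(3) by linarith
  then show ?thesis using \<nu> s by (intro prob_no_isolated_vanishes[OF \<Gamma> ratio \<rho>]) auto
qed

end

theorem theorem2:
  fixes p \<rho> :: real and q :: "nat \<Rightarrow> nat \<Rightarrow> real" and L :: "nat \<Rightarrow> nat"
  assumes p: "0 < p" "p < 1"
    and q_sym: "q 0 1 = q 1 0"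
    and q_range: "\<And>a b. a \<in> {0, 1} \<Longrightarrow> b \<in> {0, 1} \<Longrightarrow> 0 < q a b \<and> q a b < 1"
    and rho: "\<rho> > 0"
    and Gam_lt: "Gam p q 0 < Gam p q 1"
    and mu0: "1 + \<rho> * ln (1 - p) < 0"
    and adm: "admissible \<rho> L"
  shows "(1 + \<rho> * ln (Gam p q 1 powr nu_star p \<rho> * Gam p q 0 powr (1 - nu_star p \<rho>)) < 0 \<longrightarrow>
           ((\<lambda>n. measure_pmf.prob (mag_pmf p q n (L n)) {E. no_isolated n E}) \<longlonglongrightarrow> 0))
       \<and> (1 + \<rho> * ln (Gam p q 1 powr nu_star p \<rho> * Gam p q 0 powr (1 - nu_star p \<rho>)) > 0 \<longrightarrow>
           ((\<lambda>n. measure_pmf.prob (mag_pmf p q n (L n)) {E. no_isolated n E}) \<longlonglongrightarrow> 1))"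
proof -
  interpret binary_mag p q
    by unfold_locales (use p q_sym q_range in auto)
  have \<Gamma>: "Gam p q 0 \<le> Gam p q 1" using Gam_lt by simp
  have ratio: "((\<lambda>n. real (L n) / ln (real n)) \<longlongrightarrow> \<rho>) sequentially"
    by (rule admissible_imp_tendsto[OF adm rho])
  note s = nu_star[OF p rho mu0]
  show ?thesis
    unfolding ln_Gam_powr_eq_link_exponent
    using prob_no_isolated_tendsto_0[OF \<Gamma> ratio rho s] prob_no_isolated_tendsto_1[OF \<Gamma> ratio rho s]
    by blast
qed

end
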